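(* Let $V$ be a finite nonempty set, $U\subseteq V$, $\hat x$ a maximally specific partial function on $P_V$, $\hat x'=\hat x|_{P_U}$, $y\in X_U[\hat x']$, and $\tau\in\{\tau^y_{\mathrm{out}},\tau^y_{\mathrm{in}},\tau^y_{\mathrm{bd}}\}$, with the corresponding sets $P'_{01},P''_{01},P'_{10},P''_{10}$ given in the context. If $P'_{10}\cap\hat x^{-1}(1)=P'_{01}\cap\hat x^{-1}(0)=\emptyset$, or if $P''_{10}\cap\hat x^{-1}(1)=P''_{01}\cap\hat x^{-1}(0)=\emptyset$, then $\tau(X_V[\hat x])\subseteq X_V[\hat x]$.
   Context: For a finite set $W$, $P_W=\{pq\in W^2\mid p\neq q\}$ and $X_W$ is the set of $x\in\{0,1\}^{P_W}$ with $x_{pq}+x_{qr}-x_{pr}\le1$ for all pairwise distinct $p,q,r\in W$. A partial function $\tilde x$ on $P_W$ is a map from $\operatorname{dom}(\tilde x)\subseteq P_W$ to $\{0,1\}$, $\tilde x^{-1}(b)$ the pairs mapped to $b$, $X_W[\tilde x]=\{x\in X_W\mid x_{pq}=\tilde x_{pq}\ \forall pq\in\operatorname{dom}(\tilde x)\}$; convention $\tilde x_{aa}=1$, $x_{aa}=1$, $y_{aa}=1$ for all $a$. A pair is decided if it has the same value in all completions; $\tilde x$ is maximally specific if $X_W[\tilde x]\ne\emptyset$ and the decided pairs are exactly $\operatorname{dom}(\tilde x)$. $\hat x|_{P_U}$ has domain $\operatorname{dom}(\hat x)\cap P_U$. $\delta(U)=(U\times(V\setminus U))\cup((V\setminus U)\times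 U)$. For $x\in X_V[\hat x]$: $\tau^y_{\mathrm{out}}(x)_{pq}$ equals $y_{pq}$ on $P_U$; $0$ on $U\times(V\setminus U)$; on $(V\setminus U)\times U$, $1$ if $\exists r\in U: x_{pr}=1\wedge y_{rq}=1$ and $0$ otherwise; $x_{pq}$ on $P_{V\setminus U}$. $\tau^y_{\mathrm{in}}(x)_{pq}$ equals $y_{pq}$ on $P_U$; $0$ on $(V\setminus U)\times U$; on $U\times(V\setminus U)$, $1$ if $\exists r\in U: y_{pr}=1\wedge x_{rq}=1$ and $0$ otherwise; $x_{pq}$ on $P_{V\setminus U}$. $\tau^y_{\mathrm{bd}}(x)_{pq}$ equals $y_{pq}$ on $P_U$; $0$ on $\delta(U)$; $x_{pq}$ on $P_{V\setminus U}$. Sets: for $\tau^y_{\mathrm{out}}$: $P'_{01}=\{pq\in(V\setminus U)\times U\mid\exists r\in U:\hat x_{pr}\ne0\wedge y_{rq}=1\}\setminus\hat x^{-1}(1)$, $P''_{01}=((V\setminus U)\times U)\setminus\hat x^{-1}(1)$, $P'_{10}=P''_{10}=(U\times(V\setminus U))\setminus\hat x^{-1}(0)$. For $\tau^y_{\mathrm{in}}$: $P'_{01}=\{pq\in U\times(V\setminus U)\mid\exists r\in U: y_{pr}=1\wedge\hat x_{rq}\ne0\}\setminus\hat x^{-1}(1)$, $P''_{01}=(U\times(V\setminus U))\setminus\hat x^{-1}(1)$, $P'_{10}=P''_{10}=((V\setminus U)\times U)\setminus\hat x^{-1}(0)$. For $\tau^y_{\mathrm{bd}}$: $P'_{01}=P''_{01}=\emptyset$,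 $P'_{10}=P''_{10}=\delta(U)\setminus\hat x^{-1}(0)$. *)

theory Defs
  imports Main
begin

text \<open>The convention x_aa = 1 is implemented by the evaluation function val.\<close>

definition P :: "'a set \<Rightarrow> ('a \<times> 'a) set" where
  "P W = {(p, q). p \<in> W \<and> q \<in> W \<and> p \<noteq> q}"

definition X :: "'a set \<Rightarrow> (('a \<times> 'a) \<Rightarrow> int) set" where
  "X W = {x. (\<forall>pq \<in> P W. x pq \<in> {0, 1}) \<and> (\<forall>pq. pq \<notin> P W \<longrightarrow> x pq = 0) \<and>
     (\<forall>p\<in>W. \<forall>q\<in>W. \<forall>r\<in>W. p \<noteq> q \<and> q \<noteq> r \<and> p \<noteq> r \<longrightarrow>
        x (p, q) + x (q, r) - x (p, r) \<le> 1)}"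

definition val :: "(('a \<times> 'a) \<Rightarrow> int) \<Rightarrow> 'a \<Rightarrow> 'a \<Rightarrow> int" where
  "val x p q = (if p = q then 1 else x (p, q))"

definition partial_fun_on :: "'a set \<Rightarrow> (('a \<times> 'a) \<rightharpoonup> int) \<Rightarrow> bool" where
  "partial_fun_on W xh \<longleftrightarrow> dom xh \<subseteq> P W \<and> ran xh \<subseteq> {0, 1}"

definition preim :: "(('a \<times> 'a) \<rightharpoonup> int) \<Rightarrow> int \<Rightarrow> ('a \<times> 'a) set" where
  "preim xh b = {pq. xh pq = Some b}"

definition pval :: "(('a \<times> 'a) \<rightharpoonup> int) \<Rightarrow> 'a \<Rightarrow> 'a \<Rightarrow> int option" where
  "pval xh p q = (if p = q then Some 1 else xh (p, q))"

definition Xp :: "'a set \<Rightarrow> (('a \<times> 'a) \<rightharpoonup> int) \<Rightarrow> (('a \<times> 'a) \<Rightarrow> int) set" where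
  "Xp W xh = {x \<in> X W. \<forall>pq \<in> dom xh. xh pq = Some (x pq)}"

definition decided :: "'a set \<Rightarrow> (('a \<times> 'a) \<rightharpoonup> int) \<Rightarrow> ('a \<times> 'a) \<Rightarrow> bool" where
  "decided W xh pq \<longleftrightarrow> (\<exists>b. \<forall>x \<in> Xp W xh. x pq = b)"

definition maximally_specific :: "'a set \<Rightarrow> (('a \<times> 'a) \<rightharpoonup> int) \<Rightarrow> bool" where
  "maximally_specific W xh \<longleftrightarrow> partial_fun_on W xh \<and> Xp W xh \<noteq> {} \<and>
     {pq \<in> P W. decided W xh pq} = dom xh"

datatype tkind = Out | In | Bd

definition tau :: "tkind \<Rightarrow> 'a set \<Rightarrow> 'a set \<Rightarrow> (('a \<times> 'a) \<Rightarrow> int)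
    \<Rightarrow> (('a \<times> 'a) \<Rightarrow> int) \<Rightarrow> (('a \<times> 'a) \<Rightarrow> int)" where
  "tau k V U y x = (\<lambda>(p, q).
     if (p, q) \<in> P U then y (p, q)
     else if p \<in> U \<and> q \<in> V - U then
       (case k of
          In \<Rightarrow> (if \<exists>r \<in> U. val y p r = 1 \<and> val x r q = 1 then 1 else 0)
        | _ \<Rightarrow> 0)
     else if p \<in> V - U \<and> q \<in> U then
       (case k of
          Out \<Rightarrow> (if \<exists>r \<in> U. val x p r = 1 \<and> val y r q = 1 then 1 else 0)
        | _ \<Rightarrow> 0)
     else if (p, q) \<in> P (V - U) then x (p, q)
     else 0)"

definition P01' :: "tkind \<Rightarrow> 'a set \<Rightarrow> 'a set \<Rightarrow> (('a \<times> 'a) \<rightharpoonup> int)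
    \<Rightarrow> (('a \<times> 'a) \<Rightarrow> int) \<Rightarrow> ('a \<times> 'a) set" where
  "P01' k V U xh y = (case k of
     Out \<Rightarrow> {(p, q) \<in> (V - U) \<times> U. \<exists>r \<in> U. pval xh p r \<noteq> Some 0 \<and> val y r q = 1} - preim xh 1
   | In \<Rightarrow> {(p, q) \<in> U \<times> (V - U). \<exists>r \<in> U. val y p r = 1 \<and> pval xh r q \<noteq> Some 0} - preim xh 1
   | Bd \<Rightarrow> {})"

definition P01'' :: "tkind \<Rightarrow> 'a set \<Rightarrow> 'a set \<Rightarrow> (('a \<times> 'a) \<rightharpoonup> int) \<Rightarrow> ('a \<times> 'a) set" where
  "P01'' k V U xh = (case k of
     Out \<Rightarrow> ((V - U) \<times> U) - preim xh 1
   | In \<Rightarrow> (U \<times> (V - U)) - preim xh 1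
   | Bd \<Rightarrow> {})"

definition delta :: "'a set \<Rightarrow> 'a set \<Rightarrow> ('a \<times> 'a) set" where
  "delta V U = (U \<times> (V - U)) \<union> ((V - U) \<times> U)"

definition P10 :: "tkind \<Rightarrow> 'a set \<Rightarrow> 'a set \<Rightarrow> (('a \<times> 'a) \<rightharpoonup> int) \<Rightarrow> ('a \<times> 'a) set" where
  "P10 k V U xh = (case k of
     Out \<Rightarrow> (U \<times> (V - U)) - preim xh 0
   | In \<Rightarrow> ((V - U) \<times> U) - preim xh 0
   | Bd \<Rightarrow> delta V U - preim xh 0)"

text \<open>P'_10 = P''_10 in all three cases\<close>
abbreviation P10' where "P10' \<equiv> P10"
abbreviation P10'' where "P10'' \<equiv> P10"

end

theory Submission
  imports Defs
begin

text \<open>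
  Reading 0/1 vectors as relations (with the diagonal set to 1), \<open>X W\<close> consists exactly of the
  transitive relations on \<open>W\<close>. The relation \<open>\<tau>(x)\<close> glues the transitive relations \<open>y\<close> on \<open>U\<close>
  and \<open>x\<close> on \<open>V - U\<close>, and across the cut either vanishes or is the composite of \<open>x\<close> and \<open>y\<close>
  through \<open>U\<close>; every chain of two steps then collapses by transitivity of \<open>x\<close> or \<open>y\<close>, so \<open>\<tau>(x)\<close>
  is transitive. Inside \<open>U\<close> and \<open>V - U\<close> it agrees with \<open>\<hat>x\<close> because \<open>x\<close> and \<open>y\<close> do. On the
  cut, a pair forced to 1 lies outside \<open>P\<^sub>1\<^sub>0\<close>, hence in the direction in which \<open>\<tau>\<close> composes,
  and one of its endpoints witnesses the composite; a pair forced to 0 lies outside \<open>P'\<^sub>0\<^sub>1\<close>,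
  so every path through \<open>U\<close> contains a pair that \<open>\<hat>x\<close> forces to 0. Since
  \<open>P'\<^sub>0\<^sub>1 \<subseteq> P''\<^sub>0\<^sub>1\<close>, the second hypothesis implies the first.
\<close>

lemma X_values: "x \<in> X W \<Longrightarrow> pq \<in> P W \<Longrightarrow> x pq = 0 \<or> x pq = 1"
  unfolding X_def by auto

lemma X_val_values: "x \<in> X W \<Longrightarrow> p \<in> W \<Longrightarrow> q \<in> W \<Longrightarrow> val x p q \<in> {0, 1}"
  unfolding X_def P_def val_def by auto

lemma X_val_trans:
  assumes x: "x \<in> X W" and W: "p \<in> W" "q \<in> W" "r \<in> W"
    and pq: "val x p q = 1" and qr: "val x q r = 1"
  shows "val x p r = 1"
proof -
  have "x (p, q) + x (q, r) - x (p, r) \<le> 1" if "p \<noteq> q" "q \<noteq> r" "p \<noteq> r"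
    using x W that by (simp add: X_def)
  moreover have "x (p, r) = 0 \<or> x (p, r) = 1" if "p \<noteq> r"
    using X_values[OF x] W that by (auto simp: P_def)
  ultimately show ?thesis using pq qr by (auto simp: val_def split: if_splits)
qed

lemma mem_X_iff:
  "x \<in> X W \<longleftrightarrow> (\<forall>pq \<in> P W. x pq \<in> {0, 1}) \<and> (\<forall>pq. pq \<notin> P W \<longrightarrow> x pq = 0) \<and>
     (\<forall>p\<in>W. \<forall>q\<in>W. \<forall>r\<in>W. val x p q = 1 \<longrightarrow> val x q r = 1 \<longrightarrow> val x p r = 1)"
  (is "_ \<longleftrightarrow> ?rhs")
proof
  assume x: "x \<in> X W"
  then have "\<forall>pq \<in> P W. x pq \<in> {0, 1}" "\<forall>pq. pq \<notin> P W \<longrightarrow> x pq = 0"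
    by (simp_all add: X_def)
  with X_val_trans[OF x] show ?rhs by blast
next
  assume rhs: ?rhs
  have "x (p, q) + x (q, r) - x (p, r) \<le> 1"
    if W: "p \<in> W" "q \<in> W" "r \<in> W" and ne: "p \<noteq> q" "q \<noteq> r" "p \<noteq> r" for p q r
  proof -
    have "(p, q) \<in> P W" "(q, r) \<in> P W" "(p, r) \<in> P W" using W ne by (auto simp: P_def)
    then have bin: "x (p, q) \<in> {0, 1}" "x (q, r) \<in> {0, 1}" "x (p, r) \<in> {0, 1}"
      using rhs by blast+
    have "val x p q = 1 \<Longrightarrow> val x q r = 1 \<Longrightarrow> val x p r = 1"
      using rhs W by blast
    then have "x (p, q) = 1 \<Longrightarrow> x (q, r) = 1 \<Longrightarrow> x (p, r) = 1"
      using ne by (simp add: val_def)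
    with bin show ?thesis by auto
  qed
  with rhs show "x \<in> X W" by (simp add: X_def)
qed

lemma val_tau:
  assumes "p \<in> V" "q \<in> V"
  shows "val (tau k V U y x) p q =
    (if p \<in> U \<and> q \<in> U then val y p q
     else if p \<notin> U \<and> q \<notin> U then val x p q
     else if p \<in> U then (if k = In \<and> (\<exists>r\<in>U. val y p r = 1 \<and> val x r q = 1) then 1 else 0)
     else (if k = Out \<and> (\<exists>r\<in>U. val x p r = 1 \<and> val y r q = 1) then 1 else 0))"
  using assms by (cases k) (auto simp: val_def tau_def P_def)

lemma tau_val_trans:
  assumes x: "x \<in> X V" and y: "y \<in> X U" and "U \<subseteq> V"
    and V: "p \<in> V" "q \<in> V" "r \<in> V"
    and pq: "val (tau k V U y x) p q = 1" and qr: "val (tau k V U y x) q r = 1"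
  shows "val (tau k V U y x) p r = 1"
proof -
  note xtr = X_val_trans[OF x] and ytr = X_val_trans[OF y]
  note pq' = pq[unfolded val_tau[OF V(1,2)]] and qr' = qr[unfolded val_tau[OF V(2,3)]]
  note tau_pr = val_tau[OF V(1,3)]
  consider "p \<in> U" "q \<in> U" "r \<in> U" | "p \<notin> U" "q \<notin> U" "r \<notin> U"
    | "p \<in> U" "q \<in> U" "r \<notin> U" | "p \<in> U" "q \<notin> U" "r \<notin> U"
    | "p \<notin> U" "q \<in> U" "r \<in> U" | "p \<notin> U" "q \<notin> U" "r \<in> U"
    | "p \<in> U \<longleftrightarrow> r \<in> U" "q \<in> U \<longleftrightarrow> p \<notin> U"
    by blast
  then show ?thesis
  proof cases
    case 1
    then have "val y p r = 1" using ytr[of p q r] pq' qr' by simp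
    with 1 show ?thesis by (simp add: tau_pr)
  next
    case 2
    then have "val x p r = 1" using xtr[of p q r] pq' qr' V by simp
    with 2 show ?thesis by (simp add: tau_pr)
  next
    case 3
    then obtain s where "k = In" "s \<in> U" "val y q s = 1" "val x s r = 1"
      using qr' by (auto split: if_splits)
    moreover have "val y p s = 1" using ytr[of p q s] 3 pq' calculation by simp
    ultimately show ?thesis using 3 by (auto simp: tau_pr)
  next
    case 4
    then obtain s where "k = In" "s \<in> U" "val y p s = 1" "val x s q = 1"
      using pq' by (auto split: if_splits)
    moreover have "val x s r = 1"
      using xtr[of s q r] 4 qr' V calculation \<open>U \<subseteq> V\<close> by auto
    ultimately show ?thesis using 4 by (auto simp: tau_pr)
  next
    case 5
    then obtain s where "k = Out" "s \<in> U" "val x p s = 1" "val y s q = 1"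
      using pq' by (auto split: if_splits)
    moreover have "val y s r = 1" using ytr[of s q r] 5 qr' calculation by simp
    ultimately show ?thesis using 5 by (auto simp: tau_pr)
  next
    case 6
    then obtain s where "k = Out" "s \<in> U" "val x q s = 1" "val y s r = 1"
      using qr' by (auto split: if_splits)
    moreover have "val x p s = 1"
      using xtr[of p q s] 6 pq' V calculation \<open>U \<subseteq> V\<close> by auto
    ultimately show ?thesis using 6 by (auto simp: tau_pr)
  next
    case 7
    then show ?thesis using pq' qr' by (cases k) (auto split: if_splits)
  qed
qed

lemma tau_in_X:
  assumes x: "x \<in> X V" and y: "y \<in> X U" and "U \<subseteq> V"
  shows "tau k V U y x \<in> X V"
  unfolding mem_X_iff
proof (intro conjI ballI allI impI)
  fix pq assume "pq \<in> P V"
  then obtain p q where "pq = (p, q)" "p \<in> V" "q \<in> V" "p \<noteq> q" by (auto simp: P_def)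
  moreover have "val (tau k V U y x) p q \<in> {0, 1}"
    using X_val_values[OF x] X_val_values[OF y] calculation by (simp add: val_tau)
  ultimately show "tau k V U y x pq \<in> {0, 1}" by (simp add: val_def)
next
  fix pq assume "pq \<notin> P V"
  then show "tau k V U y x pq = 0"
    using \<open>U \<subseteq> V\<close> by (cases pq) (auto simp: tau_def P_def)
next
  fix p q r assume "p \<in> V" "q \<in> V" "r \<in> V"
    "val (tau k V U y x) p q = 1" "val (tau k V U y x) q r = 1"
  then show "val (tau k V U y x) p r = 1" using tau_val_trans[OF x y \<open>U \<subseteq> V\<close>] by blast
qed

lemma val_eq_if_pval_eq:
  assumes "x \<in> Xp W xh" "pval xh p q = Some b"
  shows "val x p q = b"
  using assms by (force simp: Xp_def pval_def val_def split: if_splits)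

lemma P01'_subset_P01'': "P01' k V U xh y \<subseteq> P01'' k V U xh"
  by (cases k) (auto simp: P01'_def P01''_def)

lemma tau_eq_on_dom:
  assumes x: "x \<in> Xp V xh" and y: "y \<in> Xp U (xh |` P U)" and dom: "dom xh \<subseteq> P V"
    and P10: "P10 k V U xh \<inter> preim xh 1 = {}" and P01: "P01' k V U xh y \<inter> preim xh 0 = {}"
    and pq: "xh (p, q) = Some b"
  shows "tau k V U y x (p, q) = b"
proof -
  have V: "p \<in> V" "q \<in> V" "p \<noteq> q" using pq dom by (auto simp: P_def)
  have xpq: "val x p q = b" using x pq V(3) by (simp add: val_eq_if_pval_eq pval_def)
  have "val (tau k V U y x) p q = b"
  proof (cases "p \<in> U \<longleftrightarrow> q \<in> U")
    case True
    moreover have "val y p q = b" if "p \<in> U" "q \<in> U"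
      using y pq that V(3) by (simp add: val_eq_if_pval_eq pval_def P_def)
    ultimately show ?thesis using V xpq by (auto simp: val_tau)
  next
    case cut: False
    have "b \<in> {0, 1}" using X_val_values[of x V p q] x V xpq by (simp add: Xp_def)
    then consider (one) "b = 1" | (zero) "b = 0" by blast
    then show ?thesis
    proof cases
      case one
      then have "(p, q) \<notin> P10 k V U xh" using P10 pq by (auto simp: preim_def)
      then have k: "k = (if p \<in> U then In else Out)"
        using cut V one pq by (cases k) (auto simp: P10_def delta_def preim_def)
      have "val y p p = 1" "val y q q = 1" by (simp_all add: val_def)
      then show ?thesis using V cut xpq one k by (cases "p \<in> U") (auto simp: val_tau)
    next
      case zero
      then have P01': "(p, q) \<notin> P01' k V U xh y" and "(p, q) \<notin> preim xh 1"
        using P01 pq by (auto simp: preim_def)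
      have "val x r q = 0" if "k = In" "p \<in> U" "r \<in> U" "val y p r = 1" for r
      proof -
        have "pval xh r q = Some 0"
          using P01' \<open>(p, q) \<notin> preim xh 1\<close> that cut V by (auto simp: P01'_def)
        then show ?thesis using val_eq_if_pval_eq[OF x] by blast
      qed
      moreover have "val x p r = 0" if "k = Out" "p \<notin> U" "r \<in> U" "val y r q = 1" for r
      proof -
        have "pval xh p r = Some 0"
          using P01' \<open>(p, q) \<notin> preim xh 1\<close> that cut V by (auto simp: P01'_def)
        then show ?thesis using val_eq_if_pval_eq[OF x] by blast
      qed
      ultimately show ?thesis using V cut zero by (auto simp: val_tau)
    qed
  qed
  then show ?thesis using V(3) by (simp add: val_def)
qed

theorem corollary7p4:
  fixes V U :: "'a set" and xh :: "('a \<times> 'a) \<rightharpoonup> int"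
    and y :: "('a \<times> 'a) \<Rightarrow> int" and k :: tkind
  assumes "finite V" and "V \<noteq> {}" and "U \<subseteq> V"
    and "maximally_specific V xh"
    and "y \<in> Xp U (xh |` P U)"
    and "(P10' k V U xh \<inter> preim xh 1 = {} \<and> P01' k V U xh y \<inter> preim xh 0 = {})
         \<or> (P10'' k V U xh \<inter> preim xh 1 = {} \<and> P01'' k V U xh \<inter> preim xh 0 = {})"
  shows "tau k V U y ` Xp V xh \<subseteq> Xp V xh"
proof clarify
  fix x assume x: "x \<in> Xp V xh"
  have dom: "dom xh \<subseteq> P V"
    using assms(4) by (simp add: maximally_specific_def partial_fun_on_def)
  have P10: "P10 k V U xh \<inter> preim xh 1 = {}" and P01: "P01' k V U xh y \<inter> preim xh 0 = {}"
    using assms(6) P01'_subset_P01''[of k V U xh y] by auto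
  have "x \<in> X V" "y \<in> X U" using x assms(5) by (simp_all add: Xp_def)
  then have "tau k V U y x \<in> X V" using tau_in_X assms(3) by blast
  moreover have "xh (p, q) = Some (tau k V U y x (p, q))" if "(p, q) \<in> dom xh" for p q
    using that tau_eq_on_dom[OF x assms(5) dom P10 P01] by auto
  ultimately show "tau k V U y x \<in> Xp V xh" by (auto simp: Xp_def)
qed

end
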